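(* Let $g\geq 1$ and let $\ell\geq 5$ be prime. The kernel of the homomorphism $\Psi:\operatorname{Aut}(\operatorname{GSp}_{2g}(\mathbb{F}_\ell))\to\operatorname{Aut}(\operatorname{GSp}_{2g}(\mathbb{F}_\ell)/\{\pm I\})$ is $\{\operatorname{id},\chi_{(\ell-1)/2}\}$.
   Context: For $\ell\geq 5$, $\{\pm I\}$ is a characteristic subgroup of $\operatorname{GSp}_{2g}(\mathbb{F}_\ell)$, so each automorphism of $\operatorname{GSp}_{2g}(\mathbb{F}_\ell)$ induces an automorphism of the quotient $\operatorname{GSp}_{2g}(\mathbb{F}_\ell)/\{\pm I\}$; $\Psi$ is the resulting homomorphism. $\chi_{(\ell-1)/2}$ is the automorphism $\gamma\mapsto\operatorname{mult}(\gamma)^{(\ell-1)/2}\gamma$, where $\operatorname{mult}$ is the multiplier. *)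

theory Defs
  imports "Berlekamp_Zassenhaus.Finite_Field" "Jordan_Normal_Form.Matrix" "HOL-Algebra.Coset" "HOL-Algebra.Bij"
begin

text \<open>Standard symplectic form J = [[0, I_g], [-I_g, 0]] of size 2g.\<close>
definition sympJ :: "nat \<Rightarrow> 'a::comm_ring_1 mat" where
  "sympJ g = mat (2*g) (2*g) (\<lambda>(i,j).
      if i < g \<and> j = i + g then 1
      else if g \<le> i \<and> j + g = i then -1 else 0)"

definition GSp_carrier :: "nat \<Rightarrow> 'a::field mat set" where
  "GSp_carrier g = {A \<in> carrier_mat (2*g) (2*g).
      \<exists>c. c \<noteq> 0 \<and> transpose_mat A * sympJ g * A = c \<cdot>\<^sub>m sympJ g}"

definition GSp :: "nat \<Rightarrow> ('a::field mat) monoid" where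
  "GSp g = \<lparr> carrier = GSp_carrier g, monoid.mult = (\<lambda>A B. A * B), one = 1\<^sub>m (2*g) \<rparr>"

definition multiplier :: "nat \<Rightarrow> 'a::field mat \<Rightarrow> 'a" where
  "multiplier g A = (THE c. transpose_mat A * sympJ g * A = c \<cdot>\<^sub>m sympJ g)"

definition chi :: "nat \<Rightarrow> nat \<Rightarrow> 'a::field mat \<Rightarrow> 'a mat" where
  "chi g k A = (multiplier g A ^ k) \<cdot>\<^sub>m A"

definition pmI :: "nat \<Rightarrow> 'a::field mat set" where
  "pmI g = {1\<^sub>m (2*g), - 1\<^sub>m (2*g)}"

definition Psi :: "nat \<Rightarrow> ('a::field mat \<Rightarrow> 'a mat) \<Rightarrow> 'a mat set \<Rightarrow> 'a mat set" where
  "Psi g \<sigma> = (\<lambda>C \<in> carrier (GSp g Mod pmI g). \<sigma> ` C)"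

end

theory Submission
  imports Defs "HOL-Number_Theory.Euler_Criterion"
begin

text \<open>If \<open>\<Psi>(\<sigma>)\<close> is trivial then \<open>\<sigma> A = \<plusminus>A\<close> for every \<open>A\<close>, so \<open>\<sigma>\<close> fixes all squares. In odd
  characteristic every symplectic transvection is a square, hence fixed, and since \<open>A \<noteq> -A\<close>
  the relation \<open>\<sigma>(T A) = T \<sigma>(A)\<close> shows that \<open>\<sigma>\<close> fixes \<open>A\<close> whenever it fixes \<open>T A\<close>. As the
  transvections generate \<open>Sp\<^sub>2\<^sub>g\<close>, \<open>\<sigma>\<close> is the identity on \<open>Sp\<^sub>2\<^sub>g\<close>. Writing \<open>A\<close> as a diagonal
  matrix of multiplier \<open>mult(A)\<close> times a symplectic one, the sign by which \<open>\<sigma>\<close> acts on \<open>A\<close> depends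
  only on \<open>mult(A)\<close> and is a character of \<open>\<bbbF>\<^sub>\<ell>\<^sup>\<times>\<close> trivial on squares: either trivial (\<open>\<sigma> = id\<close>)
  or the Legendre symbol \<open>mult(A)\<^sup>(\<^sup>\<ell>\<^sup>-\<^sup>1\<^sup>)\<^sup>/\<^sup>2\<close> (\<open>\<sigma> = \<chi>\<^sub>(\<^sub>\<ell>\<^sub>-\<^sub>1\<^sub>)\<^sub>/\<^sub>2\<close>).\<close>

section \<open>The standard symplectic form\<close>

definition symp_form :: "nat \<Rightarrow> 'a::field vec \<Rightarrow> 'a vec \<Rightarrow> 'a" where
  "symp_form g x y = x \<bullet> (sympJ g *\<^sub>v y)"

lemma sympJ_carrier [simp]: "sympJ g \<in> carrier_mat (2*g) (2*g)"
  by (simp add: sympJ_def)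

lemma dim_sympJ [simp]: "dim_row (sympJ g) = 2*g" "dim_col (sympJ g) = 2*g"
  by (simp_all add: sympJ_def)

lemma sympJ_mult_vec_carrier [simp]: "sympJ g *\<^sub>v x \<in> carrier_vec (2*g)"
  by (intro carrier_vecI) simp

lemma sympJ_index:
  "i < 2*g \<Longrightarrow> j < 2*g \<Longrightarrow> sympJ g $$ (i,j) =
     (if i < g \<and> j = i + g then 1 else if g \<le> i \<and> j + g = i then -1 else 0)"
  by (simp add: sympJ_def)

lemma sympJ_mult_vec_index:
  assumes x: "(x::'a::field vec) \<in> carrier_vec (2*g)" and k: "k < 2*g"
  shows "(sympJ g *\<^sub>v x) $ k = (if k < g then x $ (k+g) else - (x $ (k-g)))"
proof -
  have "(sympJ g *\<^sub>v x) $ k = (\<Sum>j\<in>{0..<2*g}. sympJ g $$ (k,j) * x $ j)"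
    using x k by (simp add: scalar_prod_def row_def)
  also have "\<dots> = (\<Sum>j\<in>{0..<2*g}. if j = (if k < g then k+g else k-g) then
        (if k < g then x $ j else - (x $ j)) else 0)"
    using k by (intro sum.cong refl) (auto simp: sympJ_index)
  also have "\<dots> = (if k < g then x $ (k+g) else - (x $ (k-g)))"
    using k by (simp add: sum.delta, linarith)
  finally show ?thesis .
qed

lemma sum_lessThan_double: "(\<Sum>k<2*(g::nat). h k) = (\<Sum>k<g. h k + h (k+g))"
proof -
  have "(\<Sum>k<2*g. h k) = sum h {0..<g} + sum h {g..<g+g}"
    by (simp add: atLeast0LessThan[symmetric] mult_2 sum.atLeastLessThan_concat)
  also have "sum h {g..<g+g} = sum (\<lambda>k. h (k+g)) {0..<g}"
    using sum.shift_bounds_nat_ivl[of h 0 g g] by simp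
  finally show ?thesis by (simp add: sum.distrib atLeast0LessThan)
qed

lemma symp_form_explicit:
  assumes x: "(x::'a::field vec) \<in> carrier_vec (2*g)" and y: "y \<in> carrier_vec (2*g)"
  shows "symp_form g x y = (\<Sum>k<g. x$k * y$(k+g) - x$(k+g) * y$k)"
proof -
  have "symp_form g x y = (\<Sum>k<2*g. x $ k * (sympJ g *\<^sub>v y) $ k)"
    using x y by (simp add: symp_form_def scalar_prod_def atLeast0LessThan)
  also have "\<dots> = (\<Sum>k<g. x$k * y$(k+g) - x$(k+g) * y$k)"
    unfolding sum_lessThan_double
    using y by (intro sum.cong refl) (simp add: sympJ_mult_vec_index del: index_mult_mat_vec)
  finally show ?thesis .
qed

lemma symp_form_swap:
  assumes "x \<in> carrier_vec (2*g)" and "y \<in> carrier_vec (2*g)"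
  shows "symp_form g y x = - symp_form g x y"
  unfolding symp_form_explicit[OF assms] symp_form_explicit[OF assms(2,1)] sum_negf[symmetric]
  by (rule sum.cong) (simp_all add: mult.commute)

lemma symp_form_self [simp]: "x \<in> carrier_vec (2*g) \<Longrightarrow> symp_form g x x = 0"
  by (simp add: symp_form_explicit mult.commute)

lemma symp_form_add_left:
  "x \<in> carrier_vec (2*g) \<Longrightarrow> y \<in> carrier_vec (2*g) \<Longrightarrow> z \<in> carrier_vec (2*g) \<Longrightarrow>
   symp_form g (x + y) z = symp_form g x z + symp_form g y z"
  unfolding symp_form_def by (rule add_scalar_prod_distrib[of _ "2*g"]) auto

lemma symp_form_add_right:
  "x \<in> carrier_vec (2*g) \<Longrightarrow> y \<in> carrier_vec (2*g) \<Longrightarrow> z \<in> carrier_vec (2*g) \<Longrightarrow>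
   symp_form g x (y + z) = symp_form g x y + symp_form g x z"
  unfolding symp_form_def
  by (simp add: mult_add_distrib_mat_vec[of _ "2*g" "2*g"], rule scalar_prod_add_distrib[of _ "2*g"], auto)

lemma symp_form_smult_left:
  "x \<in> carrier_vec (2*g) \<Longrightarrow> y \<in> carrier_vec (2*g) \<Longrightarrow>
   symp_form g (c \<cdot>\<^sub>v x) y = c * symp_form g x y"
  unfolding symp_form_def by simp

lemma symp_form_smult_right:
  "x \<in> carrier_vec (2*g) \<Longrightarrow> y \<in> carrier_vec (2*g) \<Longrightarrow>
   symp_form g x (c \<cdot>\<^sub>v y) = c * symp_form g x y"
  unfolding symp_form_def by (simp add: mult_mat_vec[of _ "2*g" "2*g"])

lemma symp_form_diff_left:
  assumes "x \<in> carrier_vec (2*g)" and "y \<in> carrier_vec (2*g)" and "z \<in> carrier_vec (2*g)"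
  shows "symp_form g (x - y) z = symp_form g x z - symp_form g y z"
  using assms by (simp add: symp_form_explicit sum_subtractf[symmetric] algebra_simps)

lemma symp_form_diff_right:
  assumes "x \<in> carrier_vec (2*g)" and "y \<in> carrier_vec (2*g)" and "z \<in> carrier_vec (2*g)"
  shows "symp_form g x (y - z) = symp_form g x y - symp_form g x z"
  using assms by (simp add: symp_form_explicit sum_subtractf[symmetric] algebra_simps)

lemma symp_form_unit_vec:
  assumes i: "i < 2*g" and j: "j < 2*g"
  shows "symp_form g (unit_vec (2*g) i) (unit_vec (2*g) j) = (sympJ g $$ (i,j) :: 'a::field)"
proof -
  have "symp_form g (unit_vec (2*g) i) (unit_vec (2*g) j) = (sympJ g *\<^sub>v unit_vec (2*g) j :: 'a vec) $ i"
    unfolding symp_form_def using i by (intro scalar_prod_left_unit) auto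
  also have "\<dots> = sympJ g $$ (i,j)"
    using i j by (simp add: sympJ_mult_vec_index del: index_mult_mat_vec) (auto simp: sympJ_index)
  finally show ?thesis .
qed

lemma mult_unit_vec_eq_col:
  assumes A: "(A::'a::semiring_1 mat) \<in> carrier_mat nr nc" and j: "j < nc"
  shows "A *\<^sub>v unit_vec nc j = col A j"
  using A j by (intro eq_vecI) (auto simp: scalar_prod_right_unit)

lemma transpose_sympJ_mult_index:
  assumes A: "A \<in> carrier_mat (2*g) (2*g)" and i: "i < 2*g" and j: "j < 2*g"
  shows "(transpose_mat A * sympJ g * A) $$ (i,j) = symp_form g (col A i) (col A j)"
proof -
  have "transpose_mat A * sympJ g * A = transpose_mat A * (sympJ g * A)"
    using A by (intro assoc_mult_mat[of _ "2*g" "2*g" _ "2*g"]) auto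
  then show ?thesis
    using A i j by (simp add: symp_form_def col_mult2[of _ "2*g" "2*g" _ "2*g"])
qed

lemma scalar_prod_mult_mat_vec_left:
  assumes A: "(A::'a::comm_ring mat) \<in> carrier_mat n n" and x: "x \<in> carrier_vec n" and w: "w \<in> carrier_vec n"
  shows "(A *\<^sub>v x) \<bullet> w = x \<bullet> (transpose_mat A *\<^sub>v w)"
  using A x w transpose_vec_mult_scalar[OF A x w]
  by (metis comm_scalar_prod mult_mat_vec_carrier transpose_carrier_mat)

lemma smult_mat_mult_vec:
  assumes A: "(A::'a::comm_ring mat) \<in> carrier_mat n n" and y: "y \<in> carrier_vec n"
  shows "(c \<cdot>\<^sub>m A) *\<^sub>v y = c \<cdot>\<^sub>v (A *\<^sub>v y)"
  using A y by (intro eq_vecI) (auto simp: smult_scalar_prod_distrib[of _ n])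

section \<open>Symplectic similitudes\<close>

lemma one_smult_mat [simp]: "(1::'a::semiring_1) \<cdot>\<^sub>m A = A"
  by (intro eq_matI) auto

lemma smult_smult_mat: "a \<cdot>\<^sub>m (b \<cdot>\<^sub>m (A::'a::semigroup_mult mat)) = (a * b) \<cdot>\<^sub>m A"
  by (intro eq_matI) (auto simp: mult.assoc)

lemma minus_one_smult_mat: "(-1::'a::ring_1) \<cdot>\<^sub>m A = - A"
  by (intro eq_matI) auto

lemma symp_similitude_iff:
  assumes A: "A \<in> carrier_mat (2*g) (2*g)"
  shows "transpose_mat A * sympJ g * A = c \<cdot>\<^sub>m sympJ g \<longleftrightarrow>
     (\<forall>i<2*g. \<forall>j<2*g. symp_form g (col A i) (col A j) = c * (sympJ g $$ (i,j) :: 'a::field))"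
proof
  assume "transpose_mat A * sympJ g * A = c \<cdot>\<^sub>m sympJ g"
  then show "\<forall>i<2*g. \<forall>j<2*g. symp_form g (col A i) (col A j) = c * sympJ g $$ (i,j)"
    using transpose_sympJ_mult_index[OF A] by (metis dim_sympJ index_smult_mat(1))
next
  assume "\<forall>i<2*g. \<forall>j<2*g. symp_form g (col A i) (col A j) = c * (sympJ g $$ (i,j) :: 'a::field)"
  then show "transpose_mat A * sympJ g * A = c \<cdot>\<^sub>m sympJ g"
    using A by (intro eq_matI)
      (simp_all del: index_mult_mat add: index_mult_mat(2,3) transpose_sympJ_mult_index[OF A] carrier_matD)
qed

lemma symp_form_similitude:
  assumes A: "A \<in> carrier_mat (2*g) (2*g)" and h: "transpose_mat A * sympJ g * A = c \<cdot>\<^sub>m sympJ g"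
    and x: "x \<in> carrier_vec (2*g)" and y: "y \<in> carrier_vec (2*g)"
  shows "symp_form g (A *\<^sub>v x) (A *\<^sub>v y) = c * symp_form g x y"
proof -
  have "symp_form g (A *\<^sub>v x) (A *\<^sub>v y) = x \<bullet> (transpose_mat A *\<^sub>v (sympJ g *\<^sub>v (A *\<^sub>v y)))"
    unfolding symp_form_def using A x y by (intro scalar_prod_mult_mat_vec_left[of _ "2*g"]) auto
  also have "transpose_mat A *\<^sub>v (sympJ g *\<^sub>v (A *\<^sub>v y)) = (transpose_mat A * sympJ g * A) *\<^sub>v y"
    using A y by (simp add: assoc_mult_mat_vec[of _ "2*g" "2*g" _ "2*g"])
  also have "\<dots> = c \<cdot>\<^sub>v (sympJ g *\<^sub>v y)"
    using h y by (simp add: smult_mat_mult_vec[of _ "2*g"])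
  finally show ?thesis unfolding symp_form_def using x by simp
qed

lemma similitude_mult:
  assumes A: "A \<in> carrier_mat (2*g) (2*g)" and B: "B \<in> carrier_mat (2*g) (2*g)"
    and hA: "transpose_mat A * sympJ g * A = a \<cdot>\<^sub>m sympJ g"
    and hB: "transpose_mat B * sympJ g * B = b \<cdot>\<^sub>m (sympJ g :: 'a::field mat)"
  shows "transpose_mat (A * B) * sympJ g * (A * B) = (a * b) \<cdot>\<^sub>m sympJ g"
  unfolding symp_similitude_iff[OF mult_carrier_mat[OF A B]]
proof (intro allI impI)
  fix i j assume i: "i < 2*g" and j: "j < 2*g"
  have "symp_form g (col (A*B) i) (col (A*B) j) = symp_form g (A *\<^sub>v col B i) (A *\<^sub>v col B j)"
    using A B i j by simp
  also have "\<dots> = a * symp_form g (col B i) (col B j)"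
    using B i j by (intro symp_form_similitude[OF A hA]) auto
  also have "symp_form g (col B i) (col B j) = b * sympJ g $$ (i,j)"
    using hB B i j by (simp add: symp_similitude_iff)
  finally show "symp_form g (col (A*B) i) (col (A*B) j) = (a * b) * sympJ g $$ (i,j)"
    by simp
qed

lemma similitude_smult:
  assumes A: "A \<in> carrier_mat (2*g) (2*g)"
    and hA: "transpose_mat A * sympJ g * A = a \<cdot>\<^sub>m (sympJ g :: 'a::field mat)"
  shows "transpose_mat (c \<cdot>\<^sub>m A) * sympJ g * (c \<cdot>\<^sub>m A) = (c * c * a) \<cdot>\<^sub>m sympJ g"
  unfolding symp_similitude_iff[OF smult_carrier_mat[OF A]]
proof (intro allI impI)
  fix i j assume i: "i < 2*g" and j: "j < 2*g"
  have "symp_form g (col (c \<cdot>\<^sub>m A) i) (col (c \<cdot>\<^sub>m A) j) = c * c * symp_form g (col A i) (col A j)"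
    using A i j by (simp add: symp_form_smult_left symp_form_smult_right)
  also have "symp_form g (col A i) (col A j) = a * sympJ g $$ (i,j)"
    using hA A i j by (simp add: symp_similitude_iff)
  finally show "symp_form g (col (c \<cdot>\<^sub>m A) i) (col (c \<cdot>\<^sub>m A) j) = (c * c * a) * sympJ g $$ (i,j)"
    by simp
qed

definition Sp :: "nat \<Rightarrow> 'a::field mat set" where
  "Sp g = {A \<in> carrier_mat (2*g) (2*g). transpose_mat A * sympJ g * A = sympJ g}"

lemma Sp_carrier: "A \<in> Sp g \<Longrightarrow> A \<in> carrier_mat (2*g) (2*g)"
  by (simp add: Sp_def)

lemma Sp_dims [simp]: "A \<in> Sp g \<Longrightarrow> dim_row A = 2*g" "A \<in> Sp g \<Longrightarrow> dim_col A = 2*g"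
  by (auto simp: Sp_def)

lemma Sp_mult_vec_carrier [simp]: "A \<in> Sp g \<Longrightarrow> A *\<^sub>v x \<in> carrier_vec (2*g)"
  by (simp add: carrier_vecI)

lemma Sp_iff:
  assumes "A \<in> carrier_mat (2*g) (2*g)"
  shows "A \<in> Sp g \<longleftrightarrow>
    (\<forall>i<2*g. \<forall>j<2*g. symp_form g (col A i) (col A j) = (sympJ g $$ (i,j) :: 'a::field))"
  using symp_similitude_iff[OF assms, of 1] assms by (simp add: Sp_def)

lemma symp_form_Sp:
  "A \<in> Sp g \<Longrightarrow> x \<in> carrier_vec (2*g) \<Longrightarrow> y \<in> carrier_vec (2*g) \<Longrightarrow>
   symp_form g (A *\<^sub>v x) (A *\<^sub>v y) = symp_form g x y"
  using symp_form_similitude[of A g 1] by (simp add: Sp_def)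

lemma Sp_mult: "A \<in> Sp g \<Longrightarrow> B \<in> Sp g \<Longrightarrow> A * B \<in> Sp g"
  using similitude_mult[of A g B 1 1] by (auto simp: Sp_def)

section \<open>Symplectic transvections\<close>

definition transvection :: "nat \<Rightarrow> 'a::field vec \<Rightarrow> 'a \<Rightarrow> 'a mat" where
  "transvection g v a = mat (2*g) (2*g)
     (\<lambda>(i,j). (if i = j then 1 else 0) + a * (v $ i * (transpose_mat (sympJ g) *\<^sub>v v) $ j))"

lemma transvection_carrier [simp]: "transvection g v a \<in> carrier_mat (2*g) (2*g)"
  by (simp add: transvection_def)

lemma dim_transvection [simp]:
  "dim_row (transvection g v a) = 2*g" "dim_col (transvection g v a) = 2*g"
  by (simp_all add: transvection_def)

lemma transvection_mult_vec:
  assumes v: "v \<in> carrier_vec (2*g)" and x: "x \<in> carrier_vec (2*g)"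
  shows "transvection g v a *\<^sub>v x = x + (a * symp_form g v x) \<cdot>\<^sub>v v"
proof (rule eq_vecI)
  define w where "w = transpose_mat (sympJ g) *\<^sub>v v"
  have "symp_form g v x = w \<bullet> x"
    unfolding symp_form_def w_def using v x by (intro transpose_vec_mult_scalar[symmetric]) auto
  then have w: "symp_form g v x = (\<Sum>j\<in>{0..<2*g}. w $ j * x $ j)"
    using x by (simp add: scalar_prod_def)
  fix i assume "i < dim_vec (x + (a * symp_form g v x) \<cdot>\<^sub>v v)"
  then have i: "i < 2*g" using v x by simp
  have "(transvection g v a *\<^sub>v x) $ i
      = (\<Sum>j\<in>{0..<2*g}. (if i = j then x $ j else 0) + a * v $ i * (w $ j * x $ j))"
    using i x unfolding w_def
    by (simp add: transvection_def scalar_prod_def row_def) (auto intro!: sum.cong simp: algebra_simps)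
  also have "\<dots> = x $ i + a * v $ i * symp_form g v x"
    using i by (simp add: w sum.distrib sum_distrib_left)
  finally show "(transvection g v a *\<^sub>v x) $ i = (x + (a * symp_form g v x) \<cdot>\<^sub>v v) $ i"
    using i v x by (simp add: mult.commute mult.left_commute)
qed (use v x in simp)

lemma transvection_symp_form:
  assumes v: "v \<in> carrier_vec (2*g)" and x: "x \<in> carrier_vec (2*g)" and y: "y \<in> carrier_vec (2*g)"
  shows "symp_form g (transvection g v a *\<^sub>v x) (transvection g v a *\<^sub>v y) = symp_form g x y"
  using v x y symp_form_swap[OF v x]
  by (simp add: transvection_mult_vec symp_form_add_left symp_form_add_right
      symp_form_smult_left symp_form_smult_right algebra_simps)

lemma transvection_Sp:
  assumes v: "v \<in> carrier_vec (2*g)"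
  shows "transvection g v a \<in> Sp g"
  unfolding Sp_iff[OF transvection_carrier]
proof (intro allI impI)
  fix i j assume i: "i < 2*g" and j: "j < 2*g"
  have "symp_form g (col (transvection g v a) i) (col (transvection g v a) j)
      = symp_form g (unit_vec (2*g) i) (unit_vec (2*g) j)"
    using v i j by (simp add: mult_unit_vec_eq_col[symmetric, of _ "2*g" "2*g"] transvection_symp_form)
  then show "symp_form g (col (transvection g v a) i) (col (transvection g v a) j) = sympJ g $$ (i,j)"
    using i j by (simp add: symp_form_unit_vec)
qed

lemma transvection_add:
  assumes v: "v \<in> carrier_vec (2*g)"
  shows "transvection g v a * transvection g v b = transvection g v (a + b)"
proof (rule mat_col_eqI)
  fix j assume "j < dim_col (transvection g v (a + b))"
  then have j: "j < 2*g" by simp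
  define e where "e = (unit_vec (2*g) j :: 'a vec)"
  have e: "e \<in> carrier_vec (2*g)" unfolding e_def by simp
  have "col (transvection g v a * transvection g v b) j
      = transvection g v a *\<^sub>v (transvection g v b *\<^sub>v e)"
    using j unfolding e_def
    by (simp add: mult_unit_vec_eq_col[of _ "2*g" "2*g"] col_mult2[of _ "2*g" "2*g" _ "2*g"])
  also have "\<dots> = transvection g v (a + b) *\<^sub>v e"
    using v e by (simp add: transvection_mult_vec symp_form_add_right symp_form_smult_right)
      (intro eq_vecI, auto simp: algebra_simps)
  also have "\<dots> = col (transvection g v (a + b)) j"
    using j unfolding e_def by (simp add: mult_unit_vec_eq_col[of _ "2*g" "2*g"])
  finally show "col (transvection g v a * transvection g v b) j = col (transvection g v (a + b)) j" .
qed auto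

lemma transvection_maps_to:
  assumes u: "u \<in> carrier_vec (2*g)" and z: "z \<in> carrier_vec (2*g)" and nz: "symp_form g z u \<noteq> 0"
  shows "transvection g (z - u) (1 / symp_form g z u) *\<^sub>v u = z"
proof -
  have "symp_form g (z - u) u = symp_form g z u"
    using u z by (simp add: symp_form_diff_left)
  then have "transvection g (z - u) (1 / symp_form g z u) *\<^sub>v u = u + 1 \<cdot>\<^sub>v (z - u)"
    using nz u z by (simp add: transvection_mult_vec)
  also have "\<dots> = z" using u z by (intro eq_vecI) auto
  finally show ?thesis .
qed

section \<open>Transvections generate the symplectic group\<close>

text \<open>The standard basis consists of the hyperbolic pairs \<open>e\<^sub>k, e\<^sub>g\<^sub>+\<^sub>k\<close> (\<open>k < g\<close>). The induction
  multiplies a symplectic matrix by transvections until it fixes the first \<open>m\<close> pairs.\<close>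

definition hyp_pair_indices :: "nat \<Rightarrow> nat \<Rightarrow> nat set" where
  "hyp_pair_indices g m = {k. k < m \<or> (g \<le> k \<and> k < g + m)}"

definition fixes_pairs :: "nat \<Rightarrow> nat \<Rightarrow> 'a::field mat \<Rightarrow> bool" where
  "fixes_pairs g m A \<longleftrightarrow>
     (\<forall>k<2*g. k \<in> hyp_pair_indices g m \<longrightarrow> A *\<^sub>v unit_vec (2*g) k = unit_vec (2*g) k)"

definition symp_orth_pairs :: "nat \<Rightarrow> nat \<Rightarrow> 'a::field vec \<Rightarrow> bool" where
  "symp_orth_pairs g m x \<longleftrightarrow>
     (\<forall>k<2*g. k \<in> hyp_pair_indices g m \<longrightarrow> symp_form g (unit_vec (2*g) k) x = 0)"

lemma symp_orth_pairs_unit_vec: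
  assumes "m \<le> g" "j < 2*g" "j \<notin> hyp_pair_indices g m"
  shows "symp_orth_pairs g m (unit_vec (2*g) j :: 'a::field vec)"
  using assms by (auto simp: symp_orth_pairs_def symp_form_unit_vec sympJ_index hyp_pair_indices_def)

lemma symp_orth_pairs_add:
  "x \<in> carrier_vec (2*g) \<Longrightarrow> y \<in> carrier_vec (2*g) \<Longrightarrow> symp_orth_pairs g m x \<Longrightarrow>
   symp_orth_pairs g m y \<Longrightarrow> symp_orth_pairs g m (x + y)"
  by (simp add: symp_orth_pairs_def symp_form_add_right)

lemma symp_orth_pairs_diff:
  "x \<in> carrier_vec (2*g) \<Longrightarrow> y \<in> carrier_vec (2*g) \<Longrightarrow> symp_orth_pairs g m x \<Longrightarrow>
   symp_orth_pairs g m y \<Longrightarrow> symp_orth_pairs g m (x - y)"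
  by (simp add: symp_orth_pairs_def symp_form_diff_right)

lemma symp_orth_pairs_mult:
  assumes A: "A \<in> Sp g" and F: "fixes_pairs g m A"
    and x: "x \<in> carrier_vec (2*g)" and o: "symp_orth_pairs g m x"
  shows "symp_orth_pairs g m (A *\<^sub>v x)"
  unfolding symp_orth_pairs_def
proof (intro allI impI)
  fix k assume k: "k < 2*g" "k \<in> hyp_pair_indices g m"
  then have "symp_form g (unit_vec (2*g) k) (A *\<^sub>v x)
      = symp_form g (A *\<^sub>v unit_vec (2*g) k) (A *\<^sub>v x)"
    using F by (simp add: fixes_pairs_def)
  also have "\<dots> = symp_form g (unit_vec (2*g) k) x"
    using A x k by (intro symp_form_Sp) auto
  finally show "symp_form g (unit_vec (2*g) k) (A *\<^sub>v x) = 0"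
    using o k by (simp add: symp_orth_pairs_def)
qed

lemma fixes_pairs_Suc:
  assumes "fixes_pairs g m B"
    and "B *\<^sub>v unit_vec (2*g) m = unit_vec (2*g) m"
    and "B *\<^sub>v unit_vec (2*g) (g+m) = unit_vec (2*g) (g+m)"
  shows "fixes_pairs g (Suc m) B"
proof -
  have "hyp_pair_indices g (Suc m) = insert m (insert (g+m) (hyp_pair_indices g m))"
    by (auto simp: hyp_pair_indices_def)
  then show ?thesis using assms by (simp add: fixes_pairs_def)
qed

lemma fixes_all_pairs_eq_one:
  assumes A: "A \<in> carrier_mat (2*g) (2*g)" and F: "fixes_pairs g g A"
  shows "A = 1\<^sub>m (2*g)"
proof (rule mat_col_eqI)
  fix j assume "j < dim_col (1\<^sub>m (2*g) :: 'a mat)"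
  then have j: "j < 2*g" by simp
  have "col A j = A *\<^sub>v unit_vec (2*g) j"
    using mult_unit_vec_eq_col[OF A j] by simp
  also have "\<dots> = unit_vec (2*g) j"
    using F j by (auto simp: fixes_pairs_def hyp_pair_indices_def)
  finally show "col A j = col (1\<^sub>m (2*g)) j" using j by simp
qed (use A in auto)

text \<open>One transvection moves \<open>A e\<^sub>k\<close> to any \<open>z\<close> with \<open>\<omega>(z, A e\<^sub>k) \<noteq> 0\<close>; if both vectors are
  orthogonal to the first \<open>m\<close> pairs, the fixed pairs are not disturbed.\<close>

lemma transvection_step:
  assumes A: "A \<in> Sp g" and F: "fixes_pairs g m A"
    and k: "k < 2*g" "k \<notin> hyp_pair_indices g m" and m: "m \<le> g"
    and z: "z \<in> carrier_vec (2*g)" and oz: "symp_orth_pairs g m z"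
    and nz: "symp_form g z (A *\<^sub>v unit_vec (2*g) k) \<noteq> 0"
  obtains v a where "v \<in> carrier_vec (2*g)"
    and "transvection g v a * A \<in> Sp g" and "fixes_pairs g m (transvection g v a * A)"
    and "(transvection g v a * A) *\<^sub>v unit_vec (2*g) k = z"
    and "\<And>x. x \<in> carrier_vec (2*g) \<Longrightarrow> symp_form g (z - A *\<^sub>v unit_vec (2*g) k) (A *\<^sub>v x) = 0 \<Longrightarrow>
           (transvection g v a * A) *\<^sub>v x = A *\<^sub>v x"
proof -
  define u where "u = A *\<^sub>v unit_vec (2*g) k"
  define v where "v = z - u"
  define T where "T = transvection g v (1 / symp_form g z u)"
  have Ac: "A \<in> carrier_mat (2*g) (2*g)" using A by (rule Sp_carrier)
  have u: "u \<in> carrier_vec (2*g)" unfolding u_def using Ac by simp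
  have v: "v \<in> carrier_vec (2*g)" unfolding v_def using z u by simp
  have ou: "symp_orth_pairs g m u"
    unfolding u_def using k m by (intro symp_orth_pairs_mult[OF A F] symp_orth_pairs_unit_vec) auto
  have ov: "symp_orth_pairs g m v"
    unfolding v_def by (rule symp_orth_pairs_diff[OF z u oz ou])
  have TA: "T * A *\<^sub>v x = T *\<^sub>v (A *\<^sub>v x)" if "x \<in> carrier_vec (2*g)" for x
    using Ac that unfolding T_def by (simp add: assoc_mult_mat_vec[of _ "2*g" "2*g" _ "2*g"])
  have T_fix: "T *\<^sub>v y = y" if "y \<in> carrier_vec (2*g)" "symp_form g v y = 0" for y
    using that v unfolding T_def by (auto simp: transvection_mult_vec intro!: eq_vecI)
  have "fixes_pairs g m (T * A)"
    unfolding fixes_pairs_def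
  proof (intro allI impI)
    fix j assume j: "j < 2*g" "j \<in> hyp_pair_indices g m"
    have "symp_form g v (unit_vec (2*g) j) = - symp_form g (unit_vec (2*g) j) v"
      using v j by (intro symp_form_swap) auto
    then have "symp_form g v (unit_vec (2*g) j) = 0"
      using ov j by (simp add: symp_orth_pairs_def)
    then show "T * A *\<^sub>v unit_vec (2*g) j = unit_vec (2*g) j"
      using F j T_fix TA by (simp add: fixes_pairs_def)
  qed
  moreover have "T * A *\<^sub>v unit_vec (2*g) k = z"
    using TA k transvection_maps_to[OF u z] nz unfolding T_def u_def v_def by simp
  moreover have "T * A \<in> Sp g"
    unfolding T_def by (intro Sp_mult transvection_Sp v A)
  ultimately show ?thesis
    using that[OF v] T_fix TA Ac unfolding T_def u_def v_def by auto
qed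

locale transvection_closed =
  fixes g :: nat and K :: "'a::field mat set"
  assumes mem_of_transvection_mult:
      "\<And>v a A. v \<in> carrier_vec (2*g) \<Longrightarrow> A \<in> Sp g \<Longrightarrow> transvection g v a * A \<in> K \<Longrightarrow> A \<in> K"
    and one_mem: "1\<^sub>m (2*g) \<in> K"
    and two_nonzero: "(2::'a) \<noteq> 0"
begin

lemma mem_if_moved:
  assumes A: "A \<in> Sp g" and F: "fixes_pairs g m A"
    and k: "k < 2*g" "k \<notin> hyp_pair_indices g m" and m: "m \<le> g"
    and z: "z \<in> carrier_vec (2*g)" and oz: "symp_orth_pairs g m z"
    and nz: "symp_form g z (A *\<^sub>v unit_vec (2*g) k) \<noteq> 0"
    and H: "\<And>B. B \<in> Sp g \<Longrightarrow> fixes_pairs g m B \<Longrightarrow> B *\<^sub>v unit_vec (2*g) k = z \<Longrightarrow>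
              (\<And>x. x \<in> carrier_vec (2*g) \<Longrightarrow> symp_form g (z - A *\<^sub>v unit_vec (2*g) k) (A *\<^sub>v x) = 0 \<Longrightarrow>
                 B *\<^sub>v x = A *\<^sub>v x) \<Longrightarrow> B \<in> K"
  shows "A \<in> K"
proof -
  obtain v a where "v \<in> carrier_vec (2*g)" and "transvection g v a * A \<in> K"
    using transvection_step[OF assms(1-8)] H by metis
  then show ?thesis using A mem_of_transvection_mult by blast
qed

lemma mem_if_fixes_e:
  assumes A: "A \<in> Sp g" and F: "fixes_pairs g m A" and m: "m < g"
    and Ae: "A *\<^sub>v unit_vec (2*g) m = unit_vec (2*g) m"
    and P: "\<And>B. B \<in> Sp g \<Longrightarrow> fixes_pairs g (Suc m) B \<Longrightarrow> B \<in> K"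
  shows "A \<in> K"
proof -
  define e where "e = (unit_vec (2*g) m :: 'a vec)"
  define f where "f = (unit_vec (2*g) (g+m) :: 'a vec)"
  define w where "w = A *\<^sub>v f"
  have Ac: "A \<in> carrier_mat (2*g) (2*g)" using A by (rule Sp_carrier)
  have ec: "e \<in> carrier_vec (2*g)" and fc: "f \<in> carrier_vec (2*g)" unfolding e_def f_def by auto
  have wc: "w \<in> carrier_vec (2*g)" unfolding w_def using Ac fc by simp
  have f_idx: "g + m < 2*g" "g + m \<notin> hyp_pair_indices g m" using m by (auto simp: hyp_pair_indices_def)
  have oe: "symp_orth_pairs g m e"
    unfolding e_def using m by (intro symp_orth_pairs_unit_vec) (auto simp: hyp_pair_indices_def)
  have of: "symp_orth_pairs g m f"
    unfolding f_def using f_idx m by (intro symp_orth_pairs_unit_vec) auto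
  have ow: "symp_orth_pairs g m w" unfolding w_def by (rule symp_orth_pairs_mult[OF A F fc of])
  have ef: "symp_form g e f = 1" and fe: "symp_form g f e = -1"
    unfolding e_def f_def using m by (simp_all add: symp_form_unit_vec sympJ_index)
  have ew: "symp_form g e w = 1" unfolding w_def using symp_form_Sp[OF A ec fc] Ae ef e_def by simp
  have we: "symp_form g w e = -1" using symp_form_swap[OF ec wc] ew by simp
  have move_f: "B \<in> K"
    if B: "B \<in> Sp g" "fixes_pairs g m B" and Be: "B *\<^sub>v e = e"
      and z: "z \<in> carrier_vec (2*g)" "symp_orth_pairs g m z"
      and nz: "symp_form g z (B *\<^sub>v f) \<noteq> 0" and ze: "symp_form g (z - B *\<^sub>v f) e = 0"
      and H: "\<And>C. C \<in> Sp g \<Longrightarrow> fixes_pairs g m C \<Longrightarrow> C *\<^sub>v e = e \<Longrightarrow> C *\<^sub>v f = z \<Longrightarrow> C \<in> K"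
    for B z
    by (rule mem_if_moved[OF B f_idx _ z, folded f_def]) (use m nz ze Be ec H in auto)
  have fixes_pair: "B \<in> K" if "B \<in> Sp g" "fixes_pairs g m B" "B *\<^sub>v e = e" "B *\<^sub>v f = f" for B
    using that by (intro P fixes_pairs_Suc) (simp_all add: e_def f_def)
  have to_f: "B \<in> K"
    if B: "B \<in> Sp g" "fixes_pairs g m B" "B *\<^sub>v e = e" and nz: "symp_form g f (B *\<^sub>v f) \<noteq> 0"
      and we: "symp_form g (B *\<^sub>v f) e = -1" for B
  proof (rule move_f[OF B fc of nz _ fixes_pair])
    show "symp_form g (f - B *\<^sub>v f) e = 0"
      using B fc ec fe we by (simp add: symp_form_diff_left Sp_carrier)
  qed
  show ?thesis
  proof (cases "symp_form g f w = 0")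
    case False
    then show ?thesis using to_f[OF A F] Ae we unfolding e_def w_def by simp
  next
    case True
    show ?thesis
    proof (rule move_f[OF A F Ae[folded e_def] _ symp_orth_pairs_add[OF wc ec ow oe]])
      show "symp_form g (w + e) (A *\<^sub>v f) \<noteq> 0"
        using wc ec ew by (simp add: symp_form_add_left w_def[symmetric])
      show "symp_form g (w + e - A *\<^sub>v f) e = 0"
        using wc ec we by (simp add: symp_form_diff_left symp_form_add_left w_def[symmetric])
      fix C assume C: "C \<in> Sp g" "fixes_pairs g m C" "C *\<^sub>v e = e" and Cf: "C *\<^sub>v f = w + e"
      show "C \<in> K"
      proof (rule to_f[OF C])
        show "symp_form g f (C *\<^sub>v f) \<noteq> 0"
          using Cf fc wc ec True fe by (simp add: symp_form_add_right)
        show "symp_form g (C *\<^sub>v f) e = -1"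
          using Cf wc ec we by (simp add: symp_form_add_left)
      qed
    qed (use wc ec in auto)
  qed
qed

lemma mem_if_fixes_pairs_Suc:
  assumes A: "A \<in> Sp g" and F: "fixes_pairs g m A" and m: "m < g"
    and P: "\<And>B. B \<in> Sp g \<Longrightarrow> fixes_pairs g (Suc m) B \<Longrightarrow> B \<in> K"
  shows "A \<in> K"
proof -
  define e where "e = (unit_vec (2*g) m :: 'a vec)"
  define f where "f = (unit_vec (2*g) (g+m) :: 'a vec)"
  define u where "u = A *\<^sub>v e"
  define w where "w = A *\<^sub>v f"
  have Ac: "A \<in> carrier_mat (2*g) (2*g)" using A by (rule Sp_carrier)
  have ec: "e \<in> carrier_vec (2*g)" and fc: "f \<in> carrier_vec (2*g)" unfolding e_def f_def by auto
  have uc: "u \<in> carrier_vec (2*g)" and wc: "w \<in> carrier_vec (2*g)"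
    unfolding u_def w_def using Ac ec fc by auto
  have e_idx: "m < 2*g" "m \<notin> hyp_pair_indices g m" using m by (auto simp: hyp_pair_indices_def)
  have oe: "symp_orth_pairs g m e"
    unfolding e_def using e_idx m by (intro symp_orth_pairs_unit_vec) auto
  have of: "symp_orth_pairs g m f"
    unfolding f_def using m by (intro symp_orth_pairs_unit_vec) (auto simp: hyp_pair_indices_def)
  have ow: "symp_orth_pairs g m w" unfolding w_def by (rule symp_orth_pairs_mult[OF A F fc of])
  have ef: "symp_form g e f = 1" unfolding e_def f_def using m by (simp add: symp_form_unit_vec sympJ_index)
  have uw: "symp_form g u w = 1" unfolding w_def u_def using symp_form_Sp[OF A ec fc] ef by simp
  have wu: "symp_form g w u = -1" using symp_form_swap[OF uc wc] uw by simp
  have to_e: "B \<in> K" if B: "B \<in> Sp g" "fixes_pairs g m B" and nz: "symp_form g e (B *\<^sub>v e) \<noteq> 0" for B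
    by (rule mem_if_moved[OF B e_idx _ ec oe, folded e_def])
      (use m nz mem_if_fixes_e[OF _ _ m _ P] e_def in auto)
  \<comment> \<open>a detour through \<open>z\<close> when \<open>u\<close> cannot be moved to \<open>e\<close> directly\<close>
  have via: "A \<in> K" if z: "z \<in> carrier_vec (2*g)" "symp_orth_pairs g m z"
      and nz1: "symp_form g z u \<noteq> 0" and nz2: "symp_form g e z \<noteq> 0" for z
    by (rule mem_if_moved[OF A F e_idx _ z, folded e_def]) (use m nz1 nz2 to_e u_def in auto)
  show ?thesis
  proof (cases "symp_form g e u = 0")
    case False
    then show ?thesis using to_e[OF A F] u_def by simp
  next
    case True
    consider "symp_form g f u \<noteq> 0"
      | "symp_form g f u = 0" "symp_form g e w \<noteq> -1"
      | "symp_form g f u = 0" "symp_form g e w = -1"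
      by blast
    then show ?thesis
    proof cases
      case 1
      then show ?thesis using via[OF fc of] ef by simp
    next
      case 2
      then show ?thesis
        using via[OF _ symp_orth_pairs_add[OF fc wc of ow]] fc wc uc ec wu ef
        by (simp add: symp_form_add_left symp_form_add_right add_eq_0_iff)
    next
      case 3
      \<comment> \<open>here \<open>\<omega>(e, f - w) = 2\<close>\<close>
      then show ?thesis
        using via[OF _ symp_orth_pairs_diff[OF fc wc of ow]] fc wc uc ec wu ef two_nonzero
        by (simp add: symp_form_diff_left symp_form_diff_right)
    qed
  qed
qed

lemma mem_if_fixes_pairs:
  "m \<le> g \<Longrightarrow> A \<in> Sp g \<Longrightarrow> fixes_pairs g m A \<Longrightarrow> A \<in> K"
proof (induction m arbitrary: A rule: inc_induct)
  case base
  then show ?case using fixes_all_pairs_eq_one one_mem Sp_carrier by metis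
next
  case (step m)
  then show ?case using mem_if_fixes_pairs_Suc by blast
qed

theorem Sp_subset: "Sp g \<subseteq> K"
proof
  fix A :: "'a mat" assume "A \<in> Sp g"
  moreover have "fixes_pairs g 0 A" by (auto simp: fixes_pairs_def hyp_pair_indices_def)
  ultimately show "A \<in> K" using mem_if_fixes_pairs[of 0] by simp
qed

end

section \<open>The group \<open>GSp\<close> and its multiplier\<close>

lemma carrier_GSp [simp]: "carrier (GSp g) = GSp_carrier g"
  by (simp add: GSp_def)

lemma mult_GSp [simp]: "x \<otimes>\<^bsub>GSp g\<^esub> y = x * y"
  by (simp add: GSp_def)

lemma GSp_carrier_mat: "A \<in> GSp_carrier g \<Longrightarrow> A \<in> carrier_mat (2*g) (2*g)"
  by (simp add: GSp_carrier_def)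

lemma GSp_dims [simp]: "A \<in> GSp_carrier g \<Longrightarrow> dim_row A = 2*g" "A \<in> GSp_carrier g \<Longrightarrow> dim_col A = 2*g"
  by (auto simp: GSp_carrier_def)

lemma smult_sympJ_inj:
  assumes g: "g \<ge> 1" and h: "c \<cdot>\<^sub>m sympJ g = d \<cdot>\<^sub>m (sympJ g :: 'a::field mat)"
  shows "c = d"
proof -
  have "(c \<cdot>\<^sub>m sympJ g) $$ (0,g) = (d \<cdot>\<^sub>m (sympJ g :: 'a mat)) $$ (0,g)" using h by simp
  then show ?thesis using g by (simp add: sympJ_index)
qed

lemma multiplier_eq:
  assumes g: "g \<ge> 1" and h: "transpose_mat A * sympJ g * A = c \<cdot>\<^sub>m (sympJ g :: 'a::field mat)"
  shows "multiplier g A = c"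
  unfolding multiplier_def
proof (rule the_equality)
  show "transpose_mat A * sympJ g * A = c \<cdot>\<^sub>m sympJ g" by (rule h)
  fix d assume "transpose_mat A * sympJ g * A = d \<cdot>\<^sub>m sympJ g"
  then show "d = c" using h smult_sympJ_inj[OF g] by metis
qed

lemma GSp_multiplier:
  assumes g: "g \<ge> 1" and A: "(A::'a::field mat) \<in> GSp_carrier g"
  shows "transpose_mat A * sympJ g * A = multiplier g A \<cdot>\<^sub>m sympJ g" and "multiplier g A \<noteq> 0"
proof -
  obtain c where "c \<noteq> 0" "transpose_mat A * sympJ g * A = c \<cdot>\<^sub>m sympJ g"
    using A by (auto simp: GSp_carrier_def)
  then show "transpose_mat A * sympJ g * A = multiplier g A \<cdot>\<^sub>m sympJ g" "multiplier g A \<noteq> 0"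
    using multiplier_eq[OF g] by auto
qed

lemma GSp_mult:
  assumes g: "g \<ge> 1" and A: "(A::'a::field mat) \<in> GSp_carrier g" and B: "B \<in> GSp_carrier g"
  shows "A * B \<in> GSp_carrier g" and "multiplier g (A * B) = multiplier g A * multiplier g B"
proof -
  have h: "transpose_mat (A * B) * sympJ g * (A * B) = (multiplier g A * multiplier g B) \<cdot>\<^sub>m sympJ g"
    using GSp_multiplier[OF g A] GSp_multiplier[OF g B] A B by (intro similitude_mult GSp_carrier_mat)
  then show "A * B \<in> GSp_carrier g"
    using GSp_multiplier(2)[OF g A] GSp_multiplier(2)[OF g B] A B
    by (auto simp: GSp_carrier_def intro!: exI[of _ "multiplier g A * multiplier g B"])
  show "multiplier g (A * B) = multiplier g A * multiplier g B" by (rule multiplier_eq[OF g h])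
qed

lemma GSp_smult:
  assumes g: "g \<ge> 1" and A: "(A::'a::field mat) \<in> GSp_carrier g" and c: "c \<noteq> 0"
  shows "c \<cdot>\<^sub>m A \<in> GSp_carrier g" and "multiplier g (c \<cdot>\<^sub>m A) = c * c * multiplier g A"
proof -
  have h: "transpose_mat (c \<cdot>\<^sub>m A) * sympJ g * (c \<cdot>\<^sub>m A) = (c * c * multiplier g A) \<cdot>\<^sub>m sympJ g"
    using GSp_multiplier[OF g A] A by (intro similitude_smult GSp_carrier_mat)
  then show "c \<cdot>\<^sub>m A \<in> GSp_carrier g"
    using GSp_multiplier(2)[OF g A] A c
    by (auto simp: GSp_carrier_def intro!: exI[of _ "c * c * multiplier g A"])
  show "multiplier g (c \<cdot>\<^sub>m A) = c * c * multiplier g A" by (rule multiplier_eq[OF g h])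
qed

lemma GSp_uminus:
  assumes g: "g \<ge> 1" and A: "(A::'a::field mat) \<in> GSp_carrier g"
  shows "- A \<in> GSp_carrier g" and "multiplier g (- A) = multiplier g A"
  using GSp_smult[OF g A, of "-1"] by (simp_all add: minus_one_smult_mat)

lemma Sp_eq:
  assumes "g \<ge> 1"
  shows "Sp g = {A \<in> GSp_carrier g. multiplier g A = (1::'a::field)}"
proof -
  have "A \<in> Sp g \<longleftrightarrow> A \<in> GSp_carrier g \<and> multiplier g A = 1" for A :: "'a mat"
  proof
    assume A: "A \<in> Sp g"
    then have h: "transpose_mat A * sympJ g * A = 1 \<cdot>\<^sub>m sympJ g" by (simp add: Sp_def)
    then show "A \<in> GSp_carrier g \<and> multiplier g A = 1"
      using A multiplier_eq[OF assms h] by (auto simp: GSp_carrier_def Sp_def intro!: exI[of _ 1])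
  next
    assume "A \<in> GSp_carrier g \<and> multiplier g A = 1"
    then have "transpose_mat A * sympJ g * A = 1 \<cdot>\<^sub>m sympJ g"
      using GSp_multiplier(1)[OF assms] by metis
    then show "A \<in> Sp g" using \<open>A \<in> GSp_carrier g \<and> _\<close> by (simp add: Sp_def GSp_carrier_mat)
  qed
  then show ?thesis by blast
qed

lemma GSp_neq_uminus:
  assumes g: "g \<ge> 1" and two: "(2::'a::field) \<noteq> 0" and A: "(A::'a mat) \<in> GSp_carrier g"
  shows "A \<noteq> - A"
proof
  assume h: "A = - A"
  have Ac: "A \<in> carrier_mat (2*g) (2*g)" using A by (rule GSp_carrier_mat)
  have "A $$ (i,j) = 0" if "i < 2*g" "j < 2*g" for i j
  proof -
    have "A $$ (i,j) = (- A) $$ (i,j)" by (rule arg_cong[OF h])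
    also have "\<dots> = - (A $$ (i,j))" using Ac that by (simp only: index_uminus_mat carrier_matD)
    finally have "A $$ (i,j) + A $$ (i,j) = 0" by (simp only: eq_neg_iff_add_eq_0)
    then show ?thesis using two by (simp only: mult_2[symmetric] mult_eq_0_iff) simp
  qed
  then have "A = 0\<^sub>m (2*g) (2*g)" using Ac by (intro eq_matI) auto
  then have "multiplier g A \<cdot>\<^sub>m sympJ g = 0\<^sub>m (2*g) (2*g)"
    using GSp_multiplier(1)[OF g A] by simp
  then have "(multiplier g A \<cdot>\<^sub>m sympJ g) $$ (0,g) = 0" using g by simp
  then show False using GSp_multiplier(2)[OF g A] g by (simp add: sympJ_index)
qed

definition symp_diag :: "nat \<Rightarrow> 'a::field \<Rightarrow> 'a mat" where
  "symp_diag g c = mat (2*g) (2*g) (\<lambda>(i,j). if i = j then (if i < g then 1 else c) else 0)"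

lemma symp_diag_carrier [simp]: "symp_diag g c \<in> carrier_mat (2*g) (2*g)"
  by (simp add: symp_diag_def)

lemma dim_symp_diag [simp]: "dim_row (symp_diag g c) = 2*g" "dim_col (symp_diag g c) = 2*g"
  by (simp_all add: symp_diag_def)

lemma col_symp_diag:
  "j < 2*g \<Longrightarrow> col (symp_diag g c) j = (if j < g then 1 else c) \<cdot>\<^sub>v unit_vec (2*g) j"
  by (intro eq_vecI) (auto simp: symp_diag_def)

lemma symp_diag_GSp:
  assumes g: "g \<ge> 1" and c: "(c::'a::field) \<noteq> 0"
  shows "symp_diag g c \<in> GSp_carrier g" and "multiplier g (symp_diag g c) = c"
proof -
  have "transpose_mat (symp_diag g c) * sympJ g * symp_diag g c = c \<cdot>\<^sub>m sympJ g"
    unfolding symp_similitude_iff[OF symp_diag_carrier]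
    by (auto simp: col_symp_diag symp_form_smult_left symp_form_smult_right
        symp_form_unit_vec sympJ_index)
  then show "symp_diag g c \<in> GSp_carrier g" "multiplier g (symp_diag g c) = c"
    using c multiplier_eq[OF g] by (auto simp: GSp_carrier_def)
qed

lemma symp_diag_mult: "symp_diag g c * symp_diag g d = symp_diag g (c * (d::'a::field))"
proof (rule mat_col_eqI)
  fix j assume "j < dim_col (symp_diag g (c * d))"
  then have j: "j < 2*g" by (simp add: symp_diag_def)
  then have "col (symp_diag g c * symp_diag g d) j = symp_diag g c *\<^sub>v col (symp_diag g d) j"
    by (simp add: col_mult2[of _ "2*g" "2*g" _ "2*g"])
  also have "\<dots> = col (symp_diag g (c * d)) j"
    using j by (simp add: col_symp_diag mult_mat_vec[of _ "2*g" "2*g"]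
        mult_unit_vec_eq_col[of _ "2*g" "2*g"] smult_smult_assoc) (simp add: mult.commute)
  finally show "col (symp_diag g c * symp_diag g d) j = col (symp_diag g (c * d)) j" .
qed (simp_all add: symp_diag_def)

lemma symp_diag_one: "symp_diag g (1::'a::field) = 1\<^sub>m (2*g)"
  by (intro eq_matI) (auto simp: symp_diag_def)

lemma one_GSp: "g \<ge> 1 \<Longrightarrow> (1\<^sub>m (2*g) :: 'a::field mat) \<in> GSp_carrier g"
  using symp_diag_GSp[of g "1::'a"] by (simp add: symp_diag_one)

section \<open>Endomorphisms acting by signs\<close>

locale pm_endomorphism =
  fixes g :: nat and \<sigma> :: "'a::field mat \<Rightarrow> 'a mat"
  assumes g: "g \<ge> 1" and two: "(2::'a) \<noteq> 0" and hom: "\<sigma> \<in> hom (GSp g) (GSp g)"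
    and pm: "\<And>A. A \<in> GSp_carrier g \<Longrightarrow> \<sigma> A = A \<or> \<sigma> A = - A"
begin

lemma sigma_mult: "A \<in> GSp_carrier g \<Longrightarrow> B \<in> GSp_carrier g \<Longrightarrow> \<sigma> (A * B) = \<sigma> A * \<sigma> B"
  using hom by (simp add: hom_def)

lemma sigma_square: "X \<in> GSp_carrier g \<Longrightarrow> \<sigma> (X * X) = X * X"
  using pm[of X] sigma_mult[of X X] by auto

lemma sigma_transvection:
  assumes v: "v \<in> carrier_vec (2*g)"
  shows "\<sigma> (transvection g v a) = transvection g v a"
proof -
  let ?S = "transvection g v (a/2)"
  have "transvection g v a = ?S * ?S"
    using two transvection_add[OF v, of "a/2" "a/2"] by (simp add: field_simps)
  moreover have "?S \<in> GSp_carrier g" using transvection_Sp[OF v] Sp_eq[OF g] by blast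
  ultimately show ?thesis using sigma_square by simp
qed

lemma transvection_closed_fixed_points: "transvection_closed g {A \<in> GSp_carrier g. \<sigma> A = A}"
proof
  show "1\<^sub>m (2*g) \<in> {A \<in> GSp_carrier g. \<sigma> A = A}"
    using sigma_square[OF one_GSp[OF g]] one_GSp[OF g] by simp
  show "(2::'a) \<noteq> 0" by (rule two)
  fix v a A assume v: "v \<in> carrier_vec (2*g)" and "A \<in> Sp g"
    and TA: "transvection g v a * A \<in> {A \<in> GSp_carrier g. \<sigma> A = A}"
  let ?T = "transvection g v a"
  have A: "A \<in> GSp_carrier g" and T: "?T \<in> GSp_carrier g"
    using \<open>A \<in> Sp g\<close> transvection_Sp[OF v] Sp_eq[OF g] by auto
  have "?T * \<sigma> A = ?T * A"
    using TA sigma_mult[OF T A] sigma_transvection[OF v] by simp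
  moreover have "?T * A \<noteq> - (?T * A)"
    by (rule GSp_neq_uminus[OF g two GSp_mult(1)[OF g T A]])
  ultimately have "\<sigma> A = A"
    using pm[OF A] A by auto
  then show "A \<in> {A \<in> GSp_carrier g. \<sigma> A = A}" using A by simp
qed

lemma sigma_Sp: "A \<in> Sp g \<Longrightarrow> \<sigma> A = A"
  using transvection_closed.Sp_subset[OF transvection_closed_fixed_points] by blast

definition keeps_diag :: "'a \<Rightarrow> bool" where
  "keeps_diag c \<longleftrightarrow> \<sigma> (symp_diag g c) = symp_diag g c"

lemma sigma_symp_diag:
  "c \<noteq> 0 \<Longrightarrow> \<sigma> (symp_diag g c) = (if keeps_diag c then symp_diag g c else - symp_diag g c)"
  using pm[OF symp_diag_GSp(1)[OF g]] by (auto simp: keeps_diag_def)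

text \<open>Every \<open>A\<close> is \<open>symp_diag (multiplier A)\<close> times a symplectic matrix, which \<open>\<sigma>\<close> fixes.\<close>

lemma sigma_eq:
  assumes A: "A \<in> GSp_carrier g"
  shows "\<sigma> A = (if keeps_diag (multiplier g A) then A else - A)"
proof -
  define c where "c = multiplier g A"
  have c: "c \<noteq> 0" unfolding c_def using GSp_multiplier[OF g A] by simp
  have Ac: "A \<in> carrier_mat (2*g) (2*g)" using A by (rule GSp_carrier_mat)
  have D: "symp_diag g (1/c) \<in> GSp_carrier g" using c by (simp add: symp_diag_GSp[OF g])
  define B where "B = symp_diag g (1/c) * A"
  have B: "B \<in> GSp_carrier g" unfolding B_def by (rule GSp_mult(1)[OF g D A])
  have "multiplier g B = 1"
    unfolding B_def using GSp_mult(2)[OF g D A] symp_diag_GSp(2)[OF g, of "1/c"] c c_def by simp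
  then have sB: "\<sigma> B = B" using sigma_Sp B Sp_eq[OF g] by blast
  have "symp_diag g c * B = (symp_diag g c * symp_diag g (1/c)) * A"
    unfolding B_def using Ac by (simp add: assoc_mult_mat[of _ "2*g" "2*g" _ "2*g" _ "2*g"])
  also have "\<dots> = A" using c Ac by (simp add: symp_diag_mult symp_diag_one)
  finally have AB: "A = symp_diag g c * B" by simp
  have "\<sigma> A = \<sigma> (symp_diag g c) * B"
    using sigma_mult[OF symp_diag_GSp(1)[OF g c] B] sB AB by simp
  also have "\<dots> = (if keeps_diag c then A else - A)"
    using sigma_symp_diag[OF c] AB B by simp
  finally show ?thesis unfolding c_def .
qed

lemma keeps_diag_mult:
  assumes c: "c \<noteq> 0" and d: "d \<noteq> 0"
  shows "keeps_diag (c * d) \<longleftrightarrow> (keeps_diag c \<longleftrightarrow> keeps_diag d)"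
proof -
  have cd: "c * d \<noteq> 0" using c d by simp
  have "\<sigma> (symp_diag g (c*d)) = \<sigma> (symp_diag g c) * \<sigma> (symp_diag g d)"
    using sigma_mult[OF symp_diag_GSp(1)[OF g c] symp_diag_GSp(1)[OF g d]] by (simp add: symp_diag_mult)
  also have "\<dots> = (if keeps_diag c \<longleftrightarrow> keeps_diag d then symp_diag g (c*d) else - symp_diag g (c*d))"
    using sigma_symp_diag[OF c] sigma_symp_diag[OF d] by (auto simp: symp_diag_mult)
  finally show ?thesis
    using GSp_neq_uminus[OF g two symp_diag_GSp(1)[OF g cd]] by (auto simp: keeps_diag_def)
qed

lemma keeps_diag_square: "d \<noteq> 0 \<Longrightarrow> keeps_diag (d * d)"
  using keeps_diag_mult by simp

end

section \<open>Prime fields\<close>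

lemma of_int_mod_ring_eq_iff:
  "(of_int x = (of_int y :: 'p::prime_card mod_ring)) \<longleftrightarrow> [x = y] (mod int CARD('p))"
proof -
  have "(of_int x = (of_int y :: 'p mod_ring)) \<longleftrightarrow> of_int (x - y) = (0::'p mod_ring)" by simp
  also have "\<dots> \<longleftrightarrow> int CHAR('p mod_ring) dvd (x - y)" by (rule of_int_eq_0_iff_char_dvd)
  also have "\<dots> \<longleftrightarrow> [x = y] (mod int CARD('p))" by (simp add: cong_iff_dvd_diff)
  finally show ?thesis .
qed

context
  assumes odd_card: "CARD('p::prime_card) > 2"
begin

lemma two_neq_zero_mod_ring: "(2::'p mod_ring) \<noteq> 0"
proof
  assume "(2::'p mod_ring) = 0"
  then have "(of_nat 2 :: 'p mod_ring) = 0" by simp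
  then have "CHAR('p mod_ring) dvd 2" by (rule of_nat_eq_0_iff_char_dvd[THEN iffD1])
  then have "CARD('p) dvd 2" by simp
  then show False using odd_card by (auto dest: dvd_imp_le)
qed

lemma power_half_eq_pm1:
  assumes c: "(c::'p mod_ring) \<noteq> 0"
  shows "c ^ ((CARD('p) - 1) div 2) = 1 \<or> c ^ ((CARD('p) - 1) div 2) = -1"
proof -
  have "odd CARD('p)" using prime_odd_nat[OF prime_card[where 'a='p]] odd_card by simp
  then have half: "2 * ((CARD('p) - 1) div 2) = CARD('p) - 1" by presburger
  have "c * c ^ (CARD('p) - 1) = c * 1"
    using finite_field_power_card_eq_same[of c] odd_card by (simp add: power_Suc[symmetric])
  then have "c ^ (CARD('p) - 1) = 1" using c by simp
  then have "(c ^ ((CARD('p) - 1) div 2))\<^sup>2 = 1"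
    by (simp only: power_mult[symmetric] mult.commute[of _ 2] half)
  then show ?thesis by (simp add: power2_eq_1_iff)
qed

lemma square_if_power_half_eq_1:
  assumes c: "(c::'p mod_ring) \<noteq> 0" and h: "c ^ ((CARD('p) - 1) div 2) = 1"
  shows "\<exists>d. d \<noteq> 0 \<and> c = d * d"
proof -
  define p where "p = CARD('p)"
  have p: "prime p" "2 < p" using prime_card odd_card unfolding p_def by auto
  define a where "a = to_int_mod_ring c"
  have ca: "c = of_int a" unfolding a_def by (simp add: of_int_of_int_mod_ring)
  have a0: "\<not> [a = 0] (mod int p)"
    using c ca of_int_mod_ring_eq_iff[of a 0] unfolding p_def by auto
  have "of_int (a ^ ((p - 1) div 2)) = (of_int 1 :: 'p mod_ring)"
    using h ca unfolding p_def by simp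
  then have a1: "[a ^ ((p - 1) div 2) = 1] (mod int p)"
    unfolding of_int_mod_ring_eq_iff p_def .
  have "QuadRes (int p) a"
  proof (rule ccontr)
    assume "\<not> QuadRes (int p) a"
    then have "[-1 = a ^ ((p - 1) div 2)] (mod int p)"
      using euler_criterion[OF p, of a] a0 by (simp add: Legendre_def)
    then have "[-1 = 1] (mod int p)" using a1 by (rule cong_trans)
    then have "int p dvd 2" by (simp add: cong_iff_dvd_diff)
    then show False using p by (auto dest: zdvd_imp_le)
  qed
  then obtain y where "[y\<^sup>2 = a] (mod int p)" unfolding QuadRes_def by auto
  then have "of_int (y\<^sup>2) = c"
    unfolding ca p_def of_int_mod_ring_eq_iff[symmetric] .
  then have "c = of_int y * of_int y" by (simp add: power2_eq_square)
  then show ?thesis using c by auto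
qed

end

lemma quadratic_character_cases:
  fixes P :: "'p::prime_card mod_ring \<Rightarrow> bool"
  assumes odd_card: "CARD('p) > 2"
    and mult: "\<And>c d. c \<noteq> 0 \<Longrightarrow> d \<noteq> 0 \<Longrightarrow> P (c * d) \<longleftrightarrow> (P c \<longleftrightarrow> P d)"
    and square: "\<And>d. d \<noteq> 0 \<Longrightarrow> P (d * d)"
  shows "(\<forall>c. c \<noteq> 0 \<longrightarrow> P c) \<or> (\<forall>c. c \<noteq> 0 \<longrightarrow> (P c \<longleftrightarrow> c ^ ((CARD('p) - 1) div 2) = 1))"
proof (cases "\<forall>c. c \<noteq> 0 \<longrightarrow> P c")
  case False
  then obtain c0 where c0: "c0 \<noteq> 0" "\<not> P c0" by blast
  have c0_pow: "c0 ^ ((CARD('p) - 1) div 2) = -1"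
  proof -
    have "c0 ^ ((CARD('p) - 1) div 2) \<noteq> 1"
      using square_if_power_half_eq_1[OF odd_card c0(1)] square c0(2) by blast
    then show ?thesis using power_half_eq_pm1[OF odd_card c0(1)] by simp
  qed
  have "\<forall>c. c \<noteq> 0 \<longrightarrow> (P c \<longleftrightarrow> c ^ ((CARD('p) - 1) div 2) = 1)"
  proof (intro allI impI)
    fix c :: "'p mod_ring" assume c: "c \<noteq> 0"
    show "P c \<longleftrightarrow> c ^ ((CARD('p) - 1) div 2) = 1"
    proof (cases "c ^ ((CARD('p) - 1) div 2) = 1")
      case True
      then obtain d where "d \<noteq> 0" "c = d * d" using square_if_power_half_eq_1[OF odd_card c] by blast
      then show ?thesis using True square by simp
    next
      case False
      then have "(c * c0) ^ ((CARD('p) - 1) div 2) = 1"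
        using power_half_eq_pm1[OF odd_card c] c0_pow by (simp add: power_mult_distrib)
      moreover have "c * c0 \<noteq> 0" using c c0(1) by simp
      ultimately obtain d where "d \<noteq> 0" "c * c0 = d * d"
        using square_if_power_half_eq_1[OF odd_card] by blast
      then have "P (c * c0)" using square by simp
      then show ?thesis using mult[OF c c0(1)] c0(2) False by simp
    qed
  qed
  then show ?thesis by blast
qed simp

section \<open>Kernel of \<open>\<Psi>\<close>\<close>

lemma r_coset_pmI:
  assumes "A \<in> GSp_carrier g"
  shows "r_coset (GSp g) (pmI g) A = {A, - (A :: 'a::field mat)}"
proof -
  have "r_coset (GSp g) (pmI g) A = {1\<^sub>m (2*g) * A, (- 1\<^sub>m (2*g)) * A}"
    unfolding r_coset_def pmI_def by auto
  then show ?thesis using assms by simp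
qed

lemma Psi_trivial_iff:
  "Psi g \<sigma> = (\<lambda>C \<in> carrier (GSp g Mod pmI g). C) \<longleftrightarrow>
   (\<forall>A \<in> GSp_carrier g. \<sigma> ` {A, - A} = {A, - (A :: 'a::field mat)})"
proof
  assume h: "Psi g \<sigma> = (\<lambda>C \<in> carrier (GSp g Mod pmI g). C)"
  show "\<forall>A \<in> GSp_carrier g. \<sigma> ` {A, - A} = {A, - A}"
  proof
    fix A :: "'a mat" assume A: "A \<in> GSp_carrier g"
    then have C: "{A, - A} \<in> carrier (GSp g Mod pmI g)"
      unfolding carrier_FactGroup using r_coset_pmI[OF A] by (auto intro!: image_eqI[of _ _ A])
    then have "Psi g \<sigma> {A, -A} = {A, -A}" using h by simp
    then show "\<sigma> ` {A, - A} = {A, - A}" using C by (simp add: Psi_def)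
  qed
next
  assume h: "\<forall>A \<in> GSp_carrier g. \<sigma> ` {A, - A} = {A, - (A :: 'a mat)}"
  show "Psi g \<sigma> = (\<lambda>C \<in> carrier (GSp g Mod pmI g). C)"
    unfolding Psi_def
  proof (rule restrict_ext)
    fix C :: "'a mat set" assume "C \<in> carrier (GSp g Mod pmI g)"
    then obtain A where A: "A \<in> GSp_carrier g" and "C = r_coset (GSp g) (pmI g) A"
      unfolding carrier_FactGroup by auto
    then show "\<sigma> ` C = C" using h r_coset_pmI[OF A] by simp
  qed
qed

context
  fixes g :: nat
  assumes g: "g \<ge> 1" and odd_card: "CARD('p::prime_card) > 2"
begin

abbreviation chi_half :: "'p mod_ring mat \<Rightarrow> 'p mod_ring mat" where
  "chi_half \<equiv> chi g ((CARD('p) - 1) div 2)"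

lemma chi_half_GSp:
  assumes A: "A \<in> GSp_carrier g"
  shows "chi_half A \<in> GSp_carrier g" and "multiplier g (chi_half A) = multiplier g A"
proof -
  let ?u = "multiplier g A ^ ((CARD('p) - 1) div 2)"
  have "?u = 1 \<or> ?u = -1" by (rule power_half_eq_pm1[OF odd_card GSp_multiplier(2)[OF g A]])
  then have u: "?u \<noteq> 0" "?u * ?u = 1" using GSp_multiplier(2)[OF g A] by auto
  show "chi_half A \<in> GSp_carrier g" unfolding chi_def by (rule GSp_smult(1)[OF g A u(1)])
  show "multiplier g (chi_half A) = multiplier g A"
    unfolding chi_def using GSp_smult(2)[OF g A u(1)] u(2) by simp
qed

lemma chi_half_eq:
  assumes "A \<in> GSp_carrier g"
  shows "chi_half A = (if multiplier g A ^ ((CARD('p) - 1) div 2) = 1 then A else - A)"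
  using power_half_eq_pm1[OF odd_card GSp_multiplier(2)[OF g assms]]
  by (auto simp: chi_def minus_one_smult_mat)

lemma chi_half_mult:
  assumes A: "A \<in> GSp_carrier g" and B: "B \<in> GSp_carrier g"
  shows "chi_half (A * B) = chi_half A * chi_half B"
proof -
  have Ac: "A \<in> carrier_mat (2*g) (2*g)" and Bc: "B \<in> carrier_mat (2*g) (2*g)"
    using A B by (auto intro: GSp_carrier_mat)
  have "chi_half (A * B) = (multiplier g A ^ ((CARD('p) - 1) div 2) *
      multiplier g B ^ ((CARD('p) - 1) div 2)) \<cdot>\<^sub>m (A * B)"
    unfolding chi_def using GSp_mult(2)[OF g A B] by (simp add: power_mult_distrib)
  also have "\<dots> = chi_half A * chi_half B"
    unfolding chi_def using Ac Bc
    by (simp add: mult_smult_assoc_mat[of _ "2*g" "2*g"] mult_smult_distrib[of _ "2*g" "2*g"]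
        smult_smult_mat) (simp add: mult.commute)
  finally show ?thesis .
qed

lemma chi_half_auto: "(\<lambda>A \<in> carrier (GSp g). chi_half A) \<in> auto (GSp g)"
proof -
  let ?f = "\<lambda>A \<in> carrier (GSp g). chi_half A"
  have "?f \<in> hom (GSp g) (GSp g)"
    unfolding hom_def using chi_half_GSp(1) GSp_mult(1)[OF g] chi_half_mult by auto
  moreover have "\<forall>A \<in> GSp_carrier g. chi_half (chi_half A) = A"
    using chi_half_eq chi_half_GSp by (auto simp: GSp_uminus[OF g])
  then have "bij_betw ?f (GSp_carrier g) (GSp_carrier g)"
    using chi_half_GSp(1) by (intro bij_betwI[where g = ?f]) auto
  ultimately show ?thesis by (simp add: auto_def Bij_def)
qed

lemma preserves_pm_cosets_iff:
  assumes hom: "\<sigma> \<in> hom (GSp g) (GSp g :: 'p mod_ring mat monoid)"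
  shows "(\<forall>A \<in> GSp_carrier g. \<sigma> ` {A, - A} = {A, - A}) \<longleftrightarrow>
    (\<forall>A \<in> GSp_carrier g. \<sigma> A = A) \<or> (\<forall>A \<in> GSp_carrier g. \<sigma> A = chi_half A)"
proof
  assume "(\<forall>A \<in> GSp_carrier g. \<sigma> A = A) \<or> (\<forall>A \<in> GSp_carrier g. \<sigma> A = chi_half A)"
  then show "\<forall>A \<in> GSp_carrier g. \<sigma> ` {A, - A} = {A, - A}"
  proof
    assume "\<forall>A \<in> GSp_carrier g. \<sigma> A = A"
    then show ?thesis using GSp_uminus(1)[OF g] by auto
  next
    assume h: "\<forall>A \<in> GSp_carrier g. \<sigma> A = chi_half A"
    show ?thesis
    proof
      fix A :: "'p mod_ring mat" assume A: "A \<in> GSp_carrier g"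
      then have "\<sigma> A = chi_half A" "\<sigma> (- A) = chi_half (- A)"
        using h GSp_uminus(1)[OF g A] by auto
      then show "\<sigma> ` {A, - A} = {A, - A}"
        using chi_half_eq[OF A] chi_half_eq[OF GSp_uminus(1)[OF g A]] GSp_uminus(2)[OF g A]
        by (auto split: if_splits)
    qed
  qed
next
  assume h: "\<forall>A \<in> GSp_carrier g. \<sigma> ` {A, - A} = {A, - A}"
  interpret pm_endomorphism g \<sigma>
  proof
    show "\<sigma> A = A \<or> \<sigma> A = - A" if "A \<in> GSp_carrier g" for A
      using h that by blast
  qed (use g two_neq_zero_mod_ring[OF odd_card] hom in auto)
  consider "\<forall>c. c \<noteq> 0 \<longrightarrow> keeps_diag c"
    | "\<forall>c. c \<noteq> 0 \<longrightarrow> (keeps_diag c \<longleftrightarrow> c ^ ((CARD('p) - 1) div 2) = 1)"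
    using quadratic_character_cases[OF odd_card keeps_diag_mult keeps_diag_square] by blast
  then show "(\<forall>A \<in> GSp_carrier g. \<sigma> A = A) \<or> (\<forall>A \<in> GSp_carrier g. \<sigma> A = chi_half A)"
  proof cases
    case 1
    then have "\<sigma> A = A" if "A \<in> GSp_carrier g" for A
      using sigma_eq[OF that] GSp_multiplier(2)[OF g that] by simp
    then show ?thesis by blast
  next
    case 2
    then have "\<sigma> A = chi_half A" if "A \<in> GSp_carrier g" for A
      using sigma_eq[OF that] chi_half_eq[OF that] GSp_multiplier(2)[OF g that] by simp
    then show ?thesis by blast
  qed
qed

end

theorem lemma3p3:
  fixes g :: nat
  assumes "g \<ge> 1" and "CARD('p::prime_card) \<ge> 5"
  shows "(\<lambda>A \<in> carrier (GSp g). chi g ((CARD('p) - 1) div 2) A)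
            \<in> auto (GSp g :: 'p mod_ring mat monoid)
       \<and> (\<forall>\<sigma> \<in> auto (GSp g :: 'p mod_ring mat monoid).
            Psi g \<sigma> = (\<lambda>C \<in> carrier (GSp g Mod pmI g). C)
            \<longleftrightarrow> ((\<forall>A \<in> carrier (GSp g). \<sigma> A = A)
                 \<or> (\<forall>A \<in> carrier (GSp g). \<sigma> A = chi g ((CARD('p) - 1) div 2) A)))"
proof -
  have odd_card: "CARD('p) > 2" using assms(2) by simp
  have "Psi g \<sigma> = (\<lambda>C \<in> carrier (GSp g Mod pmI g). C)
          \<longleftrightarrow> ((\<forall>A \<in> carrier (GSp g). \<sigma> A = A)
               \<or> (\<forall>A \<in> carrier (GSp g). \<sigma> A = chi g ((CARD('p) - 1) div 2) A))"
    if "\<sigma> \<in> auto (GSp g :: 'p mod_ring mat monoid)" for \<sigma>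
    using that preserves_pm_cosets_iff[OF assms(1) odd_card]
    by (simp add: Psi_trivial_iff auto_def)
  then show ?thesis using chi_half_auto[OF assms(1) odd_card] by blast
qed

end
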